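(* For each $a\in\{1,\dots,n\}$, the anticommutator $\{\psi_a,\psi_a^*\}=\psi_a\psi_a^*+\psi_a^*\psi_a$ belongs to the center of $\mathrm{Cl}_q(n,k)$ and satisfies $\{\psi_a,\psi_a^*\}^2=1$.
   Context: Let $\mathbb{k}$ be a field of characteristic different from $2$, let $q\in\mathbb{k}^\times$, and let $n,k$ be positive integers. The quantum Clifford algebra $\mathrm{Cl}_q(n,k)$ is the unital associative $\mathbb{k}$-algebra generated by $\psi_a,\psi_a^*,\omega_a,\omega_a^{-1}$ for $a\in\{1,\dots,n\}$, subject to the relations (for all $a,b\in\{1,\dots,n\}$): $\omega_a\omega_b=\omega_b\omega_a$; $\omega_a\omega_a^{-1}=1$; $\omega_a\psi_b=q^{\delta_{ab}}\psi_b\omega_a$; $\omega_a\psi_b^*=q^{-\delta_{ab}}\psi_b^*\omega_a$; $\psi_a\psi_b+\psi_b\psi_a=0$; $\psi_a^*\psi_b^*+\psi_b^*\psi_a^*=0$; $\psi_a\psi_a^*+q^k\psi_a^*\psi_a=\omega_a^{-k}$; $\psi_a\psi_a^*+q^{-k}\psi_a^*\psi_a=\omega_a^{k}$; and $\psi_a\psi_b^*+\psi_b^*\psi_a=0$ if $a\neq b$. *)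

theory Defs
  imports Main
begin

text \<open>A (unital associative) algebra over a field \<open>'k\<close> is modelled as a ring \<open>'a\<close>
  together with a unital ring homomorphism \<open>sc :: 'k \<Rightarrow> 'a\<close> whose image is central
  (the structure map).\<close>
definition is_k_algebra :: "('k::field \<Rightarrow> 'a::ring_1) \<Rightarrow> bool" where
  "is_k_algebra sc \<longleftrightarrow>
     sc 1 = 1 \<and> (\<forall>x y. sc (x + y) = sc x + sc y) \<and> (\<forall>x y. sc (x * y) = sc x * sc y)
     \<and> (\<forall>x z. sc x * z = z * sc x)"

inductive_set gen_subalg :: "('k \<Rightarrow> 'a::ring_1) \<Rightarrow> 'a set \<Rightarrow> 'a set"
  for sc :: "'k \<Rightarrow> 'a" and S :: "'a set" where
  gen_sc: "sc c \<in> gen_subalg sc S"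
| gen_base: "x \<in> S \<Longrightarrow> x \<in> gen_subalg sc S"
| gen_add: "x \<in> gen_subalg sc S \<Longrightarrow> y \<in> gen_subalg sc S \<Longrightarrow> x + y \<in> gen_subalg sc S"
| gen_mult: "x \<in> gen_subalg sc S \<Longrightarrow> y \<in> gen_subalg sc S \<Longrightarrow> x * y \<in> gen_subalg sc S"

text \<open>The defining relations of \<open>Cl_q(n,k)\<close>, for elements
  \<open>psi a, psis a (= psi_a^*), om a (= omega_a), omi a (= omega_a^{-1})\<close>, \<open>a \<in> {1..n}\<close>.\<close>
definition qcl_relations ::
  "('k::field \<Rightarrow> 'a::ring_1) \<Rightarrow> 'k \<Rightarrow> nat \<Rightarrow> nat \<Rightarrow>
   (nat \<Rightarrow> 'a) \<Rightarrow> (nat \<Rightarrow> 'a) \<Rightarrow> (nat \<Rightarrow> 'a) \<Rightarrow> (nat \<Rightarrow> 'a) \<Rightarrow> bool" where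
  "qcl_relations sc q n k psi psis om omi \<longleftrightarrow>
    (\<forall>a\<in>{1..n}. \<forall>b\<in>{1..n}.
       om a * om b = om b * om a
     \<and> om a * omi a = 1
     \<and> om a * psi b = sc (if a = b then q else 1) * psi b * om a
     \<and> om a * psis b = sc (if a = b then inverse q else 1) * psis b * om a
     \<and> psi a * psi b + psi b * psi a = 0
     \<and> psis a * psis b + psis b * psis a = 0
     \<and> psi a * psis a + sc (q ^ k) * psis a * psi a = omi a ^ k
     \<and> psi a * psis a + sc (inverse q ^ k) * psis a * psi a = om a ^ k
     \<and> (a \<noteq> b \<longrightarrow> psi a * psis b + psis b * psi a = 0))"

text \<open>Every such algebra is a quotient of \<open>Cl_q(n,k)\<close>, and
  \<open>Cl_q(n,k)\<close> itself is one of them.\<close>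
definition is_qcl_quotient ::
  "('k::field \<Rightarrow> 'a::ring_1) \<Rightarrow> 'k \<Rightarrow> nat \<Rightarrow> nat \<Rightarrow>
   (nat \<Rightarrow> 'a) \<Rightarrow> (nat \<Rightarrow> 'a) \<Rightarrow> (nat \<Rightarrow> 'a) \<Rightarrow> (nat \<Rightarrow> 'a) \<Rightarrow> bool" where
  "is_qcl_quotient sc q n k psi psis om omi \<longleftrightarrow>
     is_k_algebra sc \<and> qcl_relations sc q n k psi psis om omi
     \<and> gen_subalg sc (psi ` {1..n} \<union> psis ` {1..n} \<union> om ` {1..n} \<union> omi ` {1..n}) = UNIV"

end

theory Submission
  imports Defs
begin

(* Let u = psi_a psi_a^* and v = psi_a^* psi_a.  As 2 is invertible, psi_a^2 = (psi_a^* )^2 = 0,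
   so uv = vu = 0 and (u + v)^2 = u^2 + v^2.  The two mixed relations say
   omega_a^-k = u + q^k v and omega_a^k = u + q^-k v; their product in either order is again
   u^2 + v^2.  Hence omega_a^k omega_a^-k = 1 gives (u + v)^2 = 1, and omega_a^-k omega_a^k = 1
   makes omega_a^-1, a priori only a right inverse, two-sided.
   Centrality is checked on generators: psi_b and psi_b^* (b ~= a) anticommute with psi_a and
   psi_a^*; psi_a (u + v) = psi_a psi_a^* psi_a = (u + v) psi_a by nilpotency, and likewise for
   psi_a^*; the scalars q and q^-1 picked up when moving omega_b past psi_a and psi_a^* cancel;
   and omega_b^-1 is the two-sided inverse of omega_b. *)

definition anticomm :: "'a::ring \<Rightarrow> 'a \<Rightarrow> 'a" where
  "anticomm x y = x * y + y * x"

lemma power_left_inverse_imp_left_inverse: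
  fixes w wi :: "'a::monoid_mult"
  assumes "w * wi = 1" and "wi ^ k * w ^ k = 1" and "k \<ge> 1"
  shows "wi * w = 1"
proof -
  obtain m where k: "k = Suc m" using \<open>k \<ge> 1\<close> by (cases k) auto
  define l where "l = wi ^ k * w ^ m"
  have lw: "l * w = 1"
    using assms(2) by (simp add: l_def k mult.assoc flip: power_Suc2)
  have "wi = (l * w) * wi" using lw by simp
  also have "\<dots> = l" using assms(1) by (simp add: mult.assoc)
  finally show ?thesis using lw by simp
qed

lemma commute_two_sided_inverse:
  fixes w wi x :: "'a::monoid_mult"
  assumes "w * x = x * w" and "w * wi = 1" and "wi * w = 1"
  shows "wi * x = x * wi"
proof -
  have "wi * x = wi * x * (w * wi)" using assms(2) by simp
  also have "\<dots> = wi * (w * x) * wi" using assms(1) by (simp add: mult.assoc)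
  also have "\<dots> = x * wi" using assms(3) by (simp flip: mult.assoc)
  finally show ?thesis .
qed

lemma twisted_sum_mult:
  fixes u v c d :: "'a::ring"
  assumes "u * v = 0" and "v * u = 0" and c: "\<And>z. c * z = z * c"
  shows "(u + d * v) * (u + c * v) = u * u + d * c * (v * v)"
proof -
  have "u * (c * v) = c * (u * v)" by (metis c mult.assoc)
  moreover have "d * v * (c * v) = d * c * (v * v)" by (metis c mult.assoc)
  ultimately show ?thesis using assms(1,2)
    by (simp add: distrib_left distrib_right mult.assoc)
qed

lemma square_zero_mult_left:
  fixes p :: "'a::semiring_0"
  assumes "p * p = 0"
  shows "p * (p * y) = 0"
  by (simp add: assms flip: mult.assoc)

lemma anticomm_square:
  fixes p s :: "'a::ring_1"
  assumes "p * p = 0" and "s * s = 0"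
  shows "(anticomm p s)\<^sup>2 = (p * s) * (p * s) + (s * p) * (s * p)"
  using square_zero_mult_left[OF assms(1)] square_zero_mult_left[OF assms(2)]
  by (simp add: anticomm_def power2_eq_square distrib_left distrib_right mult.assoc)

lemma anticomm_commute_of_anticommute:
  fixes p s x :: "'a::ring"
  assumes "anticomm p x = 0" and "anticomm s x = 0"
  shows "anticomm p s * x = x * anticomm p s"
proof -
  have "p * x = - (x * p)" "s * x = - (x * s)"
    using assms by (simp_all add: anticomm_def eq_neg_iff_add_eq_0)
  moreover have "p * (x * y) = - (x * (p * y))" "s * (x * y) = - (x * (s * y))" for y
    using assms by (simp_all add: anticomm_def eq_neg_iff_add_eq_0 flip: mult.assoc distrib_right)
  ultimately show ?thesis by (simp add: anticomm_def distrib_left distrib_right mult.assoc)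
qed

lemma anticomm_commute_of_square_zero:
  fixes p s :: "'a::ring"
  assumes "p * p = 0"
  shows "anticomm p s * p = p * anticomm p s"
    and "anticomm s p * p = p * anticomm s p"
  using square_zero_mult_left[OF assms] assms
  by (simp_all add: anticomm_def distrib_left distrib_right mult.assoc)

lemma anticomm_commute_of_scaled_commute:
  fixes p s w c d :: "'a::ring_1"
  assumes c: "\<And>z. c * z = z * c" and d: "\<And>z. d * z = z * d" and "c * d = 1"
    and wp: "w * p = c * p * w" and ws: "w * s = d * s * w"
  shows "anticomm p s * w = w * anticomm p s"
proof -
  have "w * (p * s) = c * p * (w * s)" by (simp only: wp flip: mult.assoc)
  also have "\<dots> = c * (p * d) * s * w" by (simp only: ws mult.assoc)
  also have "\<dots> = (c * d) * (p * s * w)" by (simp only: d[of p, symmetric] mult.assoc)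
  finally have ps: "w * (p * s) = p * s * w" using \<open>c * d = 1\<close> by simp
  have "w * (s * p) = d * s * (w * p)" by (simp only: ws flip: mult.assoc)
  also have "\<dots> = d * (s * c) * p * w" by (simp only: wp mult.assoc)
  also have "\<dots> = (d * c) * (s * p * w)" by (simp only: c[of s, symmetric] mult.assoc)
  finally have sp: "w * (s * p) = s * p * w" using \<open>c * d = 1\<close> c[of d] by simp
  show ?thesis
    using ps sp by (simp add: anticomm_def distrib_left distrib_right)
qed

lemma is_k_algebra_inverse_scalar:
  assumes "is_k_algebra sc" and "c \<noteq> 0"
  shows "sc (inverse c) * sc c = 1"
  using assms unfolding is_k_algebra_def by (metis field_class.field_inverse)

lemma is_k_algebra_double_eq_zero:
  fixes sc :: "'k::field \<Rightarrow> 'a::ring_1" and x :: 'a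
  assumes alg: "is_k_algebra sc" and two: "(2::'k) \<noteq> 0" and "x + x = 0"
  shows "x = 0"
proof -
  have "sc 2 = sc 1 + sc 1"
    using alg unfolding is_k_algebra_def by (metis one_add_one)
  then have sc2: "sc 2 = (2::'a)"
    using alg unfolding is_k_algebra_def by simp
  have "x = (sc (inverse 2) * sc 2) * x"
    using is_k_algebra_inverse_scalar[OF alg two] by simp
  also have "\<dots> = sc (inverse 2) * (x + x)"
    by (simp add: sc2 mult.assoc mult_2)
  finally show ?thesis using assms(3) by simp
qed

lemma gen_subalg_commute:
  assumes "is_k_algebra sc" and "\<And>x. x \<in> S \<Longrightarrow> z * x = x * z" and "y \<in> gen_subalg sc S"
  shows "z * y = y * z"
  using assms(3)
proof (induction rule: gen_subalg.induct)
  case (gen_sc c)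
  then show ?case using assms(1) unfolding is_k_algebra_def by metis
next
  case (gen_base x)
  then show ?case by (rule assms(2))
next
  case (gen_add x y)
  then show ?case by (simp add: distrib_left distrib_right)
next
  case (gen_mult x y)
  then show ?case by (simp flip: mult.assoc) (simp add: mult.assoc)
qed

context
  fixes sc :: "'k::field \<Rightarrow> 'a::ring_1" and q :: 'k and n k :: nat
    and psi psis om omi :: "nat \<Rightarrow> 'a"
begin

lemma qcl_square_zero:
  assumes alg: "is_k_algebra sc" and two: "(2::'k) \<noteq> 0"
    and rel: "qcl_relations sc q n k psi psis om omi" and b: "b \<in> {1..n}"
  shows "psi b * psi b = 0" and "psis b * psis b = 0"
proof -
  have "psi b * psi b + psi b * psi b = 0" and "psis b * psis b + psis b * psis b = 0"
    using rel b unfolding qcl_relations_def by blast+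
  then show "psi b * psi b = 0" and "psis b * psis b = 0"
    using is_k_algebra_double_eq_zero[OF alg two] by blast+
qed

lemma qcl_anticomm_square_and_omega_left_inverse:
  assumes alg: "is_k_algebra sc" and two: "(2::'k) \<noteq> 0" and q: "q \<noteq> 0" and k: "k \<ge> 1"
    and rel: "qcl_relations sc q n k psi psis om omi" and b: "b \<in> {1..n}"
  shows "(anticomm (psi b) (psis b))\<^sup>2 = 1" and "omi b * om b = 1"
proof -
  define u v where "u = psi b * psis b" and "v = psis b * psi b"
  define c d where "c = sc (q ^ k)" and "d = sc (inverse q ^ k)"
  have central: "c * z = z * c" "d * z = z * d" for z
    using alg unfolding is_k_algebra_def c_def d_def by blast+
  have "d * c = 1"
    using is_k_algebra_inverse_scalar[OF alg] q by (simp add: c_def d_def power_inverse)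
  then have "c * d = 1" using central by metis
  have "u * v = 0" "v * u = 0"
    using qcl_square_zero[OF alg two rel b] by (simp_all add: u_def v_def mult.assoc
        square_zero_mult_left)
  then have products: "(u + d * v) * (u + c * v) = u * u + v * v"
    "(u + c * v) * (u + d * v) = u * u + v * v"
    using twisted_sum_mult central \<open>d * c = 1\<close> \<open>c * d = 1\<close> by (metis mult_1_left)+
  have "om b * omi b = 1" and omi_k: "omi b ^ k = u + c * v" and om_k: "om b ^ k = u + d * v"
    using rel b unfolding qcl_relations_def u_def v_def c_def d_def by (auto simp: mult.assoc)
  then have "u * u + v * v = 1"
    using left_right_inverse_power[of "om b" "omi b" k] products(1) by simp
  then show "(anticomm (psi b) (psis b))\<^sup>2 = 1"
    using anticomm_square[OF qcl_square_zero[OF alg two rel b]] by (simp add: u_def v_def)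
  have "omi b ^ k * om b ^ k = 1"
    using omi_k om_k products(2) \<open>u * u + v * v = 1\<close> by simp
  then show "omi b * om b = 1"
    using power_left_inverse_imp_left_inverse \<open>om b * omi b = 1\<close> k by blast
qed

lemma qcl_anticomm_commute_omega:
  assumes alg: "is_k_algebra sc" and q: "q \<noteq> 0"
    and rel: "qcl_relations sc q n k psi psis om omi" and a: "a \<in> {1..n}" and b: "b \<in> {1..n}"
  shows "anticomm (psi a) (psis a) * om b = om b * anticomm (psi a) (psis a)"
proof -
  have central: "sc x * z = z * sc x" for x z
    using alg unfolding is_k_algebra_def by blast
  have "sc q * sc (inverse q) = 1" "sc 1 = (1::'a)"
    using is_k_algebra_inverse_scalar[OF alg q] alg unfolding is_k_algebra_def by metis+
  then have "sc (if b = a then q else 1) * sc (if b = a then inverse q else 1) = 1"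
    by simp
  moreover have "om b * psi a = sc (if b = a then q else 1) * psi a * om b"
    and "om b * psis a = sc (if b = a then inverse q else 1) * psis a * om b"
    using rel a b unfolding qcl_relations_def by blast+
  ultimately show ?thesis
    by (rule anticomm_commute_of_scaled_commute[OF central central])
qed

lemma qcl_anticomm_commute_generator:
  assumes alg: "is_k_algebra sc" and two: "(2::'k) \<noteq> 0" and q: "q \<noteq> 0" and k: "k \<ge> 1"
    and rel: "qcl_relations sc q n k psi psis om omi" and a: "a \<in> {1..n}"
    and x: "x \<in> psi ` {1..n} \<union> psis ` {1..n} \<union> om ` {1..n} \<union> omi ` {1..n}"
  shows "anticomm (psi a) (psis a) * x = x * anticomm (psi a) (psis a)"
proof -
  have anticomm_rel: "anticomm (psi a) (psi b) = 0" "anticomm (psis a) (psis b) = 0"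
    "b \<noteq> a \<Longrightarrow> anticomm (psi a) (psis b) = 0" "b \<noteq> a \<Longrightarrow> anticomm (psis a) (psi b) = 0"
    if "b \<in> {1..n}" for b
    using rel a that unfolding qcl_relations_def anticomm_def by (auto simp: add.commute)
  from x consider (psi) b where "b \<in> {1..n}" "x = psi b" | (psis) b where "b \<in> {1..n}" "x = psis b"
    | (om) b where "b \<in> {1..n}" "x = om b" | (omi) b where "b \<in> {1..n}" "x = omi b"
    by blast
  then show ?thesis
  proof cases
    case (psi b)
    show ?thesis
    proof (cases "b = a")
      case True
      then show ?thesis
        using anticomm_commute_of_square_zero(1)[OF qcl_square_zero(1)[OF alg two rel a]] psi(2)
        by simp
    next
      case False
      then show ?thesis
        using anticomm_commute_of_anticommute anticomm_rel[OF psi(1)] psi(2) by simp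
    qed
  next
    case (psis b)
    show ?thesis
    proof (cases "b = a")
      case True
      then show ?thesis
        using anticomm_commute_of_square_zero(2)[OF qcl_square_zero(2)[OF alg two rel a]] psis(2)
        by simp
    next
      case False
      then show ?thesis
        using anticomm_commute_of_anticommute anticomm_rel[OF psis(1)] psis(2) by simp
    qed
  next
    case (om b)
    then show ?thesis using qcl_anticomm_commute_omega[OF alg q rel a] by simp
  next
    case (omi b)
    have "om b * omi b = 1"
      using rel omi(1) unfolding qcl_relations_def by blast
    then have "omi b * anticomm (psi a) (psis a) = anticomm (psi a) (psis a) * omi b"
      using commute_two_sided_inverse qcl_anticomm_commute_omega[OF alg q rel a omi(1)]
        qcl_anticomm_square_and_omega_left_inverse(2)[OF alg two q k rel omi(1)] by metis
    then show ?thesis using omi(2) by simp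
  qed
qed

end

theorem lemma3p7:
  fixes sc :: "'k::field \<Rightarrow> 'a::ring_1"
    and q :: 'k and n k :: nat
    and psi psis om omi :: "nat \<Rightarrow> 'a"
  assumes "(2::'k) \<noteq> 0"
    and "q \<noteq> 0"
    and "n \<ge> 1" and "k \<ge> 1"
    and "is_qcl_quotient sc q n k psi psis om omi"
    and "a \<in> {1..n}"
  shows "(\<forall>x. (psi a * psis a + psis a * psi a) * x = x * (psi a * psis a + psis a * psi a))
       \<and> (psi a * psis a + psis a * psi a) ^ 2 = 1"
proof -
  have alg: "is_k_algebra sc" and rel: "qcl_relations sc q n k psi psis om omi"
    and gen: "gen_subalg sc (psi ` {1..n} \<union> psis ` {1..n} \<union> om ` {1..n} \<union> omi ` {1..n}) = UNIV"
    using assms(5) unfolding is_qcl_quotient_def by blast+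
  have "anticomm (psi a) (psis a) * x = x * anticomm (psi a) (psis a)" for x
    using gen_subalg_commute[OF alg qcl_anticomm_commute_generator[OF alg assms(1,2,4) rel assms(6)]]
      gen by blast
  moreover have "(anticomm (psi a) (psis a))\<^sup>2 = 1"
    using qcl_anticomm_square_and_omega_left_inverse(1)[OF alg assms(1,2,4) rel assms(6)] .
  ultimately show ?thesis unfolding anticomm_def by blast
qed

end
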